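(* Let $\Gamma=(V,E)$ be a connected graph of valency at least $3$, $G\leqslant\mathrm{Aut}(\Gamma)$, and assume $\Gamma$ is $(G,2)$-arc-transitive. Let $G^*=\langle G_{\alpha_1},G_{\alpha_2}\rangle$ for some $\{\alpha_1,\alpha_2\}\in E$ and $M=\mathrm{soc}(G^* )$, and assume $G^*$ is a quasiprimitive group of PA type on each of its orbits on $V$, so that $M=T_1\times\cdots\times T_n$ is the unique minimal normal subgroup of $G^*$, with $n\geqslant2$ and the $T_i$ pairwise isomorphic nonabelian simple groups, and for each $\alpha\in V$ there are subgroups $R_i<T_i$ with $M_\alpha\leqslant R_1\times\cdots\times R_n$ such that every projection $\pi_i:M_\alpha\to R_i$ is surjective. Assume $\Gamma$ is $M$-locally primitive. Then every $\pi_i$ is injective; in particular, $M_\alpha\cong R_i$ for all $i$.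
   Context: Graphs are finite, simple and undirected; $G_\alpha$ is a vertex stabilizer and $\Gamma(\alpha)$ the neighbourhood of $\alpha$. A $2$-arc is a triple $(\alpha,\beta,\gamma)$ of distinct vertices with $\{\alpha,\beta\},\{\beta,\gamma\}\in E$, and $(G,2)$-arc-transitive means $G$ is transitive on $2$-arcs. A permutation group is quasiprimitive if each minimal normal subgroup is transitive. $\mathrm{soc}(X)$ is the subgroup generated by all minimal normal subgroups of $X$. $\Gamma$ is $M$-locally primitive if $M_\gamma$ acts primitively on $\Gamma(\gamma)$ for every vertex $\gamma$. *)

theory Defs
  imports Main
begin

definition simple_graph :: "'a set \<Rightarrow> ('a \<Rightarrow> 'a \<Rightarrow> bool) \<Rightarrow> bool" where
  "simple_graph V E \<longleftrightarrow> finite V \<and> (\<forall>x y. E x y \<longrightarrow> x \<in> V \<and> y \<in> V)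
     \<and> (\<forall>x y. E x y \<longrightarrow> E y x) \<and> (\<forall>x. \<not> E x x)"

definition nbhd :: "('a \<Rightarrow> 'a \<Rightarrow> bool) \<Rightarrow> 'a \<Rightarrow> 'a set" where
  "nbhd E a = {b. E a b}"

definition connected_graph :: "'a set \<Rightarrow> ('a \<Rightarrow> 'a \<Rightarrow> bool) \<Rightarrow> bool" where
  "connected_graph V E \<longleftrightarrow> V \<noteq> {} \<and> (\<forall>x\<in>V. \<forall>y\<in>V. E\<^sup>*\<^sup>* x y)"

definition perm_on :: "'a set \<Rightarrow> ('a \<Rightarrow> 'a) \<Rightarrow> bool" where
  "perm_on V f \<longleftrightarrow> bij_betw f V V \<and> (\<forall>x. x \<notin> V \<longrightarrow> f x = x)"

definition perm_group :: "'a set \<Rightarrow> ('a \<Rightarrow> 'a) set \<Rightarrow> bool" where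
  "perm_group V H \<longleftrightarrow> (\<forall>h\<in>H. perm_on V h) \<and> id \<in> H
     \<and> (\<forall>g\<in>H. \<forall>h\<in>H. g \<circ> h \<in> H) \<and> (\<forall>h\<in>H. inv h \<in> H)"

definition subgrp :: "'a set \<Rightarrow> ('a \<Rightarrow> 'a) set \<Rightarrow> ('a \<Rightarrow> 'a) set \<Rightarrow> bool" where
  "subgrp V K H \<longleftrightarrow> perm_group V K \<and> K \<subseteq> H"

definition gen :: "'a set \<Rightarrow> ('a \<Rightarrow> 'a) set \<Rightarrow> ('a \<Rightarrow> 'a) set" where
  "gen V S = \<Inter> {H. perm_group V H \<and> S \<subseteq> H}"

definition normal_sub :: "'a set \<Rightarrow> ('a \<Rightarrow> 'a) set \<Rightarrow> ('a \<Rightarrow> 'a) set \<Rightarrow> bool" where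
  "normal_sub V N H \<longleftrightarrow> subgrp V N H \<and> (\<forall>h\<in>H. \<forall>m\<in>N. h \<circ> m \<circ> inv h \<in> N)"

definition minimal_normal :: "'a set \<Rightarrow> ('a \<Rightarrow> 'a) set \<Rightarrow> ('a \<Rightarrow> 'a) set \<Rightarrow> bool" where
  "minimal_normal V N H \<longleftrightarrow> normal_sub V N H \<and> N \<noteq> {id}
     \<and> (\<forall>K. normal_sub V K H \<and> K \<subseteq> N \<longrightarrow> K = {id} \<or> K = N)"

definition soc :: "'a set \<Rightarrow> ('a \<Rightarrow> 'a) set \<Rightarrow> ('a \<Rightarrow> 'a) set" where
  "soc V H = gen V (\<Union> {N. minimal_normal V N H})"

definition stab :: "('a \<Rightarrow> 'a) set \<Rightarrow> 'a \<Rightarrow> ('a \<Rightarrow> 'a) set" where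
  "stab H a = {h \<in> H. h a = a}"

definition orbit :: "('a \<Rightarrow> 'a) set \<Rightarrow> 'a \<Rightarrow> 'a set" where
  "orbit H a = {h a | h. h \<in> H}"

definition transitive_on :: "('a \<Rightarrow> 'a) set \<Rightarrow> 'a set \<Rightarrow> bool" where
  "transitive_on H \<Omega> \<longleftrightarrow> (\<forall>x\<in>\<Omega>. \<forall>y\<in>\<Omega>. \<exists>h\<in>H. h x = y)"

text \<open>Primitivity of H on a set \<Omega> (which H is assumed to stabilise):
  transitive, and no block other than trivial ones.\<close>
definition primitive_on :: "('a \<Rightarrow> 'a) set \<Rightarrow> 'a set \<Rightarrow> bool" where
  "primitive_on H \<Omega> \<longleftrightarrow> \<Omega> \<noteq> {} \<and> transitive_on H \<Omega>
     \<and> (\<forall>B. B \<subseteq> \<Omega> \<and> (\<forall>h\<in>H. h ` B = B \<or> h ` B \<inter> B = {})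
            \<longrightarrow> card B \<le> 1 \<or> B = \<Omega>)"

text \<open>Quasiprimitivity of H on an orbit \<Delta>: every normal subgroup of H acts
  either trivially or transitively on \<Delta> (equivalently, every minimal normal
  subgroup of the induced group H^\<Delta> is transitive).\<close>
definition quasiprimitive_on :: "'a set \<Rightarrow> ('a \<Rightarrow> 'a) set \<Rightarrow> 'a set \<Rightarrow> bool" where
  "quasiprimitive_on V H \<Delta> \<longleftrightarrow> transitive_on H \<Delta> \<and>
     (\<forall>N. normal_sub V N H \<longrightarrow> (\<forall>n\<in>N. \<forall>x\<in>\<Delta>. n x = x) \<or> transitive_on N \<Delta>)"

definition is_aut :: "'a set \<Rightarrow> ('a \<Rightarrow> 'a \<Rightarrow> bool) \<Rightarrow> ('a \<Rightarrow> 'a) \<Rightarrow> bool" where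
  "is_aut V E g \<longleftrightarrow> perm_on V g \<and> (\<forall>x y. E x y \<longleftrightarrow> E (g x) (g y))"

definition aut_subgroup :: "'a set \<Rightarrow> ('a \<Rightarrow> 'a \<Rightarrow> bool) \<Rightarrow> ('a \<Rightarrow> 'a) set \<Rightarrow> bool" where
  "aut_subgroup V E G \<longleftrightarrow> perm_group V G \<and> (\<forall>g\<in>G. is_aut V E g)"

definition two_arc :: "('a \<Rightarrow> 'a \<Rightarrow> bool) \<Rightarrow> 'a \<times> 'a \<times> 'a \<Rightarrow> bool" where
  "two_arc E t \<longleftrightarrow> (case t of (a, b, c) \<Rightarrow> E a b \<and> E b c \<and> a \<noteq> c \<and> a \<noteq> b \<and> b \<noteq> c)"

definition two_arc_transitive ::
  "('a \<Rightarrow> 'a \<Rightarrow> bool) \<Rightarrow> ('a \<Rightarrow> 'a) set \<Rightarrow> bool" where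
  "two_arc_transitive E G \<longleftrightarrow>
     (\<forall>a b c a' b' c'. two_arc E (a, b, c) \<and> two_arc E (a', b', c')
        \<longrightarrow> (\<exists>g\<in>G. g a = a' \<and> g b = b' \<and> g c = c'))"

definition locally_primitive ::
  "'a set \<Rightarrow> ('a \<Rightarrow> 'a \<Rightarrow> bool) \<Rightarrow> ('a \<Rightarrow> 'a) set \<Rightarrow> bool" where
  "locally_primitive V E M \<longleftrightarrow> (\<forall>c\<in>V. primitive_on (stab M c) (nbhd E c))"

definition nonabelian_simple :: "'a set \<Rightarrow> ('a \<Rightarrow> 'a) set \<Rightarrow> bool" where
  "nonabelian_simple V T \<longleftrightarrow> perm_group V T \<and> T \<noteq> {id}
     \<and> (\<exists>a\<in>T. \<exists>b\<in>T. a \<circ> b \<noteq> b \<circ> a)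
     \<and> (\<forall>K. normal_sub V K T \<longrightarrow> K = {id} \<or> K = T)"

definition grp_iso :: "('a \<Rightarrow> 'a) set \<Rightarrow> ('a \<Rightarrow> 'a) set \<Rightarrow> bool" where
  "grp_iso A B \<longleftrightarrow> (\<exists>\<phi>. bij_betw \<phi> A B \<and> (\<forall>x\<in>A. \<forall>y\<in>A. \<phi> (x \<circ> y) = \<phi> x \<circ> \<phi> y))"

definition compl_factors :: "'a set \<Rightarrow> (nat \<Rightarrow> ('a \<Rightarrow> 'a) set) \<Rightarrow> nat \<Rightarrow> nat \<Rightarrow> ('a \<Rightarrow> 'a) set" where
  "compl_factors V T n i = gen V (\<Union> {T j | j. j < n \<and> j \<noteq> i})"

definition internal_direct_product ::
  "'a set \<Rightarrow> ('a \<Rightarrow> 'a) set \<Rightarrow> (nat \<Rightarrow> ('a \<Rightarrow> 'a) set) \<Rightarrow> nat \<Rightarrow> bool" where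
  "internal_direct_product V M T n \<longleftrightarrow>
     perm_group V M \<and> (\<forall>i<n. normal_sub V (T i) M)
     \<and> (\<forall>i<n. T i \<inter> compl_factors V T n i = {id})
     \<and> M = gen V (\<Union> {T i | i. i < n})"

definition proj :: "'a set \<Rightarrow> (nat \<Rightarrow> ('a \<Rightarrow> 'a) set) \<Rightarrow> nat \<Rightarrow> nat \<Rightarrow> ('a \<Rightarrow> 'a) \<Rightarrow> ('a \<Rightarrow> 'a)" where
  "proj V T n i m = (THE t. t \<in> T i \<and> (\<exists>s\<in>compl_factors V T n i. m = t \<circ> s))"

end

theory Submission
  imports Defs "HOL-Combinatorics.Permutations"
begin

text \<open>
  Fix i and let X be the product of the factors T j with j \<noteq> i; the kernel of the
  projection onto T i restricted to the stabiliser M_a is the stabiliser X_a.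
  As X is normal in M, each X_d is normal in M_d, so local primitivity makes X_d either
  trivial or transitive on the neighbourhood of d. If it is trivial on every neighbourhood,
  connectivity forces X_a = 1. Otherwise, for a neighbour b of a vertex d where X_d is
  transitive, conjugating by M shows that the X-orbit of b contains every vertex reachable
  from b by a walk of even length. The elements of M moving every vertex along an even walk
  form a normal subgroup of G*, so by minimality of M it is either trivial, and then already
  M_a = 1, or all of M. In the latter case every t in T i agrees at b with some element of X,
  so the projection of M_b is all of T i, contradicting R i \<noteq> T i.
\<close>

section \<open>Permutation groups\<close>

lemma perm_on_iff_permutes: "perm_on V f \<longleftrightarrow> f permutes V"
  unfolding perm_on_def by (metis bij_imp_permutes permutes_imp_bij permutes_not_in)

lemma perm_on_bij: "perm_on V f \<Longrightarrow> bij f"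
  by (simp add: perm_on_iff_permutes permutes_bij)

lemma bij_inv_cancel:
  assumes "bij f"
  shows "inv f (f x) = x" "f (inv f x) = x" "inv f \<circ> f = id" "f \<circ> inv f = id"
  using assms by (auto simp: bij_is_inj bij_is_surj surj_f_inv_f fun_eq_iff)

lemma perm_group_perm_on: "perm_group V H \<Longrightarrow> h \<in> H \<Longrightarrow> perm_on V h"
  and perm_group_id: "perm_group V H \<Longrightarrow> id \<in> H"
  and perm_group_comp: "perm_group V H \<Longrightarrow> g \<in> H \<Longrightarrow> h \<in> H \<Longrightarrow> g \<circ> h \<in> H"
  and perm_group_inv: "perm_group V H \<Longrightarrow> h \<in> H \<Longrightarrow> inv h \<in> H"
  unfolding perm_group_def by auto

lemma perm_group_bij: "perm_group V H \<Longrightarrow> h \<in> H \<Longrightarrow> bij h"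
  using perm_group_perm_on perm_on_bij by blast

lemma perm_group_apply: "perm_group V H \<Longrightarrow> h \<in> H \<Longrightarrow> x \<in> V \<Longrightarrow> h x \<in> V"
  using perm_group_perm_on unfolding perm_on_iff_permutes
  by (blast intro: permutes_in_image[THEN iffD2])

lemma perm_group_fixes_outside: "perm_group V H \<Longrightarrow> h \<in> H \<Longrightarrow> x \<notin> V \<Longrightarrow> h x = x"
  using perm_group_perm_on unfolding perm_on_def by blast

lemma perm_group_subset:
  assumes "perm_group V H" "K \<subseteq> H" "id \<in> K"
    and "\<And>g h. g \<in> K \<Longrightarrow> h \<in> K \<Longrightarrow> g \<circ> h \<in> K" "\<And>h. h \<in> K \<Longrightarrow> inv h \<in> K"
  shows "perm_group V K"
  using assms unfolding perm_group_def by blast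

lemma gen_superset: "S \<subseteq> gen V S"
  unfolding gen_def by auto

lemma gen_least: "perm_group V H \<Longrightarrow> S \<subseteq> H \<Longrightarrow> gen V S \<subseteq> H"
  unfolding gen_def by auto

lemma perm_group_gen:
  assumes "perm_group V H" "S \<subseteq> H"
  shows "perm_group V (gen V S)"
  by (rule perm_group_subset[OF assms(1) gen_least[OF assms]])
    (auto simp: gen_def perm_group_def)

lemma perm_group_stab:
  assumes "perm_group V H"
  shows "perm_group V (stab H a)"
proof (rule perm_group_subset[OF assms])
  fix h assume "h \<in> stab H a"
  then show "inv h \<in> stab H a"
    using assms perm_group_inv perm_group_bij
    unfolding stab_def by (metis (mono_tags, lifting) bij_inv_cancel(1) mem_Collect_eq)
qed (use assms perm_group_id perm_group_comp in \<open>auto simp: stab_def\<close>)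

lemma normal_sub_perm_group: "normal_sub V N H \<Longrightarrow> perm_group V N"
  and normal_sub_subset: "normal_sub V N H \<Longrightarrow> N \<subseteq> H"
  and normal_sub_conj: "normal_sub V N H \<Longrightarrow> h \<in> H \<Longrightarrow> m \<in> N \<Longrightarrow> h \<circ> m \<circ> inv h \<in> N"
  unfolding normal_sub_def subgrp_def by auto

lemma normal_sub_conj_inv:
  assumes "perm_group V H" "normal_sub V N H" "h \<in> H" "m \<in> N"
  shows "inv h \<circ> m \<circ> h \<in> N"
  using normal_sub_conj[OF assms(2) perm_group_inv[OF assms(1,3)] assms(4)]
  by (simp add: inv_inv_eq perm_group_bij[OF assms(1,3)])

lemma normal_sub_stab:
  assumes "perm_group V H" "normal_sub V N H"
  shows "normal_sub V (stab N a) (stab H a)"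
  unfolding normal_sub_def subgrp_def
proof (intro conjI ballI)
  show "perm_group V (stab N a)" by (rule perm_group_stab[OF normal_sub_perm_group[OF assms(2)]])
  show "stab N a \<subseteq> stab H a" using normal_sub_subset[OF assms(2)] by (auto simp: stab_def)
  fix h m assume "h \<in> stab H a" "m \<in> stab N a"
  then have "h \<in> H" "h a = a" "m \<in> N" "m a = a" by (auto simp: stab_def)
  moreover from this have "inv h a = a" by (metis perm_group_bij[OF assms(1)] bij_inv_cancel(1))
  ultimately show "h \<circ> m \<circ> inv h \<in> stab N a"
    using normal_sub_conj[OF assms(2)] by (simp add: stab_def)
qed

lemma normal_sub_gen:
  assumes H: "perm_group V H" and S: "S \<subseteq> H"
    and conj: "\<And>h s. h \<in> H \<Longrightarrow> s \<in> S \<Longrightarrow> h \<circ> s \<circ> inv h \<in> gen V S"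
  shows "normal_sub V (gen V S) H"
proof -
  let ?N = "{s \<in> gen V S. \<forall>h\<in>H. h \<circ> s \<circ> inv h \<in> gen V S}"
  have gen: "perm_group V (gen V S)" by (rule perm_group_gen[OF H S])
  have "perm_group V ?N"
  proof (rule perm_group_subset[OF gen])
    show "id \<in> ?N"
      using perm_group_id[OF gen] perm_group_bij[OF H] by (simp add: bij_inv_cancel)
  next
    fix f g assume f: "f \<in> ?N" and g: "g \<in> ?N"
    have "h \<circ> (f \<circ> g) \<circ> inv h = (h \<circ> f \<circ> inv h) \<circ> (h \<circ> g \<circ> inv h)" if "h \<in> H" for h
      using perm_group_bij[OF H that] by (simp add: fun_eq_iff bij_inv_cancel)
    then show "f \<circ> g \<in> ?N" using f g perm_group_comp[OF gen] by auto
  next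
    fix f assume f: "f \<in> ?N"
    have "h \<circ> inv f \<circ> inv h = inv (h \<circ> f \<circ> inv h)" if "h \<in> H" for h
      using perm_group_bij[OF H that] perm_group_bij[OF gen, of f] f
      by (simp add: o_inv_distrib bij_imp_bij_inv bij_comp inv_inv_eq o_assoc)
    then show "inv f \<in> ?N" using f perm_group_inv[OF gen] by auto
  qed auto
  moreover have "S \<subseteq> ?N" using conj gen_superset by blast
  ultimately have "gen V S \<subseteq> ?N" by (rule gen_least)
  then show ?thesis using gen S gen_least[OF H S] unfolding normal_sub_def subgrp_def by blast
qed

lemma normal_sub_mult_perm_group:
  assumes H: "perm_group V H" and A: "subgrp V A H" and B: "normal_sub V B H"
  shows "perm_group V {a \<circ> b | a b. a \<in> A \<and> b \<in> B}"
proof -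
  have Apg: "perm_group V A" and AH: "A \<subseteq> H" using A unfolding subgrp_def by auto
  have Bpg: "perm_group V B" and BH: "B \<subseteq> H" using B unfolding normal_sub_def subgrp_def by auto
  have bij: "bij h" if "h \<in> H" for h using perm_group_bij[OF H that] .
  show ?thesis
  proof (rule perm_group_subset[OF H])
    show "id \<in> {a \<circ> b | a b. a \<in> A \<and> b \<in> B}"
      using perm_group_id[OF Apg] perm_group_id[OF Bpg] comp_id[of id, symmetric] by blast
  next
    fix f g assume "f \<in> {a \<circ> b | a b. a \<in> A \<and> b \<in> B}" "g \<in> {a \<circ> b | a b. a \<in> A \<and> b \<in> B}"
    then obtain a1 b1 a2 b2 where ab: "a1 \<in> A" "b1 \<in> B" "a2 \<in> A" "b2 \<in> B" "f = a1 \<circ> b1" "g = a2 \<circ> b2"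
      by blast
    have "f \<circ> g = (a1 \<circ> a2) \<circ> ((inv a2 \<circ> b1 \<circ> a2) \<circ> b2)"
      using ab bij AH by (simp add: fun_eq_iff bij_inv_cancel subset_iff)
    moreover have "(inv a2 \<circ> b1 \<circ> a2) \<circ> b2 \<in> B"
      using ab AH normal_sub_conj_inv[OF H B] perm_group_comp[OF Bpg] by blast
    ultimately show "f \<circ> g \<in> {a \<circ> b | a b. a \<in> A \<and> b \<in> B}"
      using ab perm_group_comp[OF Apg] by blast
  next
    fix f assume "f \<in> {a \<circ> b | a b. a \<in> A \<and> b \<in> B}"
    then obtain a b where ab: "a \<in> A" "b \<in> B" "f = a \<circ> b" by blast
    have "inv f = inv b \<circ> inv a" unfolding ab(3) using ab bij AH BH
      by (simp add: o_inv_distrib subset_iff)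
    also have "\<dots> = inv a \<circ> (a \<circ> inv b \<circ> inv a)"
      using ab bij AH by (simp add: fun_eq_iff bij_inv_cancel subset_iff)
    finally have "inv f = inv a \<circ> (a \<circ> inv b \<circ> inv a)" .
    moreover have "a \<circ> inv b \<circ> inv a \<in> B"
      using ab AH normal_sub_conj[OF B] perm_group_inv[OF Bpg] by blast
    ultimately show "inv f \<in> {a \<circ> b | a b. a \<in> A \<and> b \<in> B}"
      using ab perm_group_inv[OF Apg] by blast
  qed (use AH BH perm_group_comp[OF H] in blast)
qed

section \<open>Internal direct products\<close>

lemma internal_direct_product_factor:
  assumes "internal_direct_product V M T n" "i < n"
  shows "normal_sub V (T i) M"
  using assms unfolding internal_direct_product_def by blast

lemma compl_factors_normal:
  assumes dp: "internal_direct_product V M T n"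
  shows "normal_sub V (compl_factors V T n i) M"
  unfolding compl_factors_def
proof (rule normal_sub_gen)
  show "perm_group V M" using dp unfolding internal_direct_product_def by blast
  show "\<Union> {T j | j. j < n \<and> j \<noteq> i} \<subseteq> M"
  proof
    fix s assume "s \<in> \<Union> {T j | j. j < n \<and> j \<noteq> i}"
    then obtain j where "j < n" "j \<noteq> i" "s \<in> T j" by blast
    then show "s \<in> M" using normal_sub_subset[OF internal_direct_product_factor[OF dp]] by blast
  qed
  fix h s assume "h \<in> M" "s \<in> \<Union> {T j | j. j < n \<and> j \<noteq> i}"
  then obtain j where j: "j < n" "j \<noteq> i" "s \<in> T j" by blast
  then have "h \<circ> s \<circ> inv h \<in> T j"
    using normal_sub_conj[OF internal_direct_product_factor[OF dp j(1)] \<open>h \<in> M\<close>] by blast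
  then have "h \<circ> s \<circ> inv h \<in> \<Union> {T j | j. j < n \<and> j \<noteq> i}" using j by blast
  then show "h \<circ> s \<circ> inv h \<in> gen V (\<Union> {T j | j. j < n \<and> j \<noteq> i})"
    by (rule subsetD[OF gen_superset])
qed

lemma internal_direct_product_decomp:
  assumes dp: "internal_direct_product V M T n" and i: "i < n" and m: "m \<in> M"
  obtains t s where "t \<in> T i" "s \<in> compl_factors V T n i" "m = t \<circ> s"
proof -
  let ?X = "compl_factors V T n i"
  let ?P = "{t \<circ> s | t s. t \<in> T i \<and> s \<in> ?X}"
  have M: "perm_group V M" and M_gen: "M = gen V (\<Union> {T j | j. j < n})"
    using dp unfolding internal_direct_product_def by blast+
  have Ti: "normal_sub V (T i) M" by (rule internal_direct_product_factor[OF dp i])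
  have X: "normal_sub V ?X M" by (rule compl_factors_normal[OF dp])
  have "perm_group V ?P"
    using normal_sub_mult_perm_group[OF M _ X] Ti unfolding normal_sub_def by blast
  moreover have "\<Union> {T j | j. j < n} \<subseteq> ?P"
  proof
    fix x assume "x \<in> \<Union> {T j | j. j < n}"
    then obtain j where j: "j < n" "x \<in> T j" by blast
    show "x \<in> ?P"
    proof (cases "j = i")
      case True
      then show ?thesis
        using j perm_group_id[OF normal_sub_perm_group[OF X]] comp_id[of x, symmetric] by blast
    next
      case False
      then have "x \<in> \<Union> {T j | j. j < n \<and> j \<noteq> i}" using j by blast
      then have "x \<in> ?X" unfolding compl_factors_def by (rule subsetD[OF gen_superset])
      then show ?thesis
        using perm_group_id[OF normal_sub_perm_group[OF Ti]] id_comp[of x, symmetric] by blast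
    qed
  qed
  ultimately have "M \<subseteq> ?P" unfolding M_gen by (rule gen_least)
  with m that show ?thesis by blast
qed

lemma proj_comp:
  assumes dp: "internal_direct_product V M T n" and i: "i < n"
    and t: "t \<in> T i" and s: "s \<in> compl_factors V T n i"
  shows "proj V T n i (t \<circ> s) = t"
  unfolding proj_def
proof (rule the_equality)
  show "t \<in> T i \<and> (\<exists>s'\<in>compl_factors V T n i. t \<circ> s = t \<circ> s')" using t s by blast
next
  fix t' assume "t' \<in> T i \<and> (\<exists>s'\<in>compl_factors V T n i. t \<circ> s = t' \<circ> s')"
  then obtain s' where t': "t' \<in> T i" and s': "s' \<in> compl_factors V T n i" and eq: "t \<circ> s = t' \<circ> s'"
    by blast
  have Ti: "perm_group V (T i)"
    by (rule normal_sub_perm_group[OF internal_direct_product_factor[OF dp i]])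
  have X: "perm_group V (compl_factors V T n i)"
    by (rule normal_sub_perm_group[OF compl_factors_normal[OF dp]])
  have bij: "bij t" "bij s'" using perm_group_bij Ti X t s' by blast+
  have "inv t \<circ> t' = s \<circ> inv s'"
  proof
    fix z
    have "t (s (inv s' z)) = t' z" using eq bij by (metis comp_apply bij_inv_cancel(2))
    then show "(inv t \<circ> t') z = (s \<circ> inv s') z" using bij by (metis comp_apply bij_inv_cancel(1))
  qed
  then have "inv t \<circ> t' \<in> T i \<inter> compl_factors V T n i"
    using perm_group_comp perm_group_inv Ti X t t' s s' by (metis IntI)
  then have "inv t \<circ> t' = id" using dp i unfolding internal_direct_product_def by blast
  then show "t' = t" using bij by (metis comp_id o_assoc id_comp bij_inv_cancel(4))
qed

lemma inj_on_proj:
  assumes dp: "internal_direct_product V M T n" and i: "i < n"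
    and H: "perm_group V H" "H \<subseteq> M" and triv: "H \<inter> compl_factors V T n i \<subseteq> {id}"
  shows "inj_on (proj V T n i) H"
proof (rule inj_onI)
  fix x y assume x: "x \<in> H" and y: "y \<in> H" and eq: "proj V T n i x = proj V T n i y"
  obtain t1 s1 where ts1: "t1 \<in> T i" "s1 \<in> compl_factors V T n i" "x = t1 \<circ> s1"
    using internal_direct_product_decomp[OF dp i] x H(2) by blast
  obtain t2 s2 where ts2: "t2 \<in> T i" "s2 \<in> compl_factors V T n i" "y = t2 \<circ> s2"
    using internal_direct_product_decomp[OF dp i] y H(2) by blast
  have "t1 = t2" using eq ts1 ts2 proj_comp[OF dp i] by metis
  have Ti: "perm_group V (T i)"
    by (rule normal_sub_perm_group[OF internal_direct_product_factor[OF dp i]])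
  have X: "perm_group V (compl_factors V T n i)"
    by (rule normal_sub_perm_group[OF compl_factors_normal[OF dp]])
  have bij: "bij t1" "bij s1" "bij s2" using perm_group_bij Ti X ts1 ts2 by blast+
  have "inv y \<circ> x = inv s2 \<circ> (inv t1 \<circ> t1) \<circ> s1"
    unfolding ts1(3) ts2(3) \<open>t1 = t2\<close>[symmetric] using bij by (simp add: o_inv_distrib o_assoc)
  then have "inv y \<circ> x = inv s2 \<circ> s1" using bij by (simp add: bij_inv_cancel)
  then have "inv y \<circ> x \<in> H \<inter> compl_factors V T n i"
    using x y ts1 ts2 perm_group_comp perm_group_inv H(1) X by (metis IntI)
  then have "inv y \<circ> x = id" using triv by blast
  then show "x = y" using perm_group_bij[OF H(1) y]
    by (metis comp_id o_assoc id_comp bij_inv_cancel(4))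
qed

lemma factor_subset_proj_stab:
  assumes dp: "internal_direct_product V M T n" and i: "i < n"
    and orbit: "\<And>t. t \<in> T i \<Longrightarrow> t b \<in> orbit (compl_factors V T n i) b"
  shows "T i \<subseteq> proj V T n i ` stab M b"
proof
  fix t assume t: "t \<in> T i"
  have M: "perm_group V M" using dp unfolding internal_direct_product_def by blast
  have X: "normal_sub V (compl_factors V T n i) M" by (rule compl_factors_normal[OF dp])
  have tM: "t \<in> M" using t normal_sub_subset[OF internal_direct_product_factor[OF dp i]] by blast
  obtain x where x: "x \<in> compl_factors V T n i" "x b = t b" using orbit[OF t] unfolding orbit_def
    by force
  have xM: "x \<in> M" using x(1) normal_sub_subset[OF X] by blast
  have "inv x \<circ> t \<in> stab M b"
    using x perm_group_comp[OF M perm_group_inv[OF M xM] tM] perm_group_bij[OF M xM]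
    by (simp add: stab_def bij_inv_cancel flip: x(2))
  moreover have "inv x \<circ> t = t \<circ> (inv t \<circ> inv x \<circ> t)"
    using perm_group_bij[OF M tM] by (simp add: fun_eq_iff bij_inv_cancel)
  moreover have "inv t \<circ> inv x \<circ> t \<in> compl_factors V T n i"
    using normal_sub_conj_inv[OF M X tM] perm_group_inv[OF normal_sub_perm_group[OF X] x(1)] .
  ultimately show "t \<in> proj V T n i ` stab M b"
    using proj_comp[OF dp i t] by (metis image_eqI)
qed

section \<open>Orbits of normal subgroups\<close>

lemma orbit_self: "perm_group V K \<Longrightarrow> x \<in> orbit K x"
  unfolding orbit_def using perm_group_id id_apply[of x, symmetric] by blast

lemma orbit_eq:
  assumes K: "perm_group V K" and y: "y \<in> orbit K x"
  shows "orbit K y = orbit K x"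
proof -
  obtain k where k: "k \<in> K" "y = k x" using y unfolding orbit_def by blast
  have "k' y \<in> orbit K x" if "k' \<in> K" for k'
  proof -
    have "k' y = (k' \<circ> k) x" using k by simp
    then show ?thesis unfolding orbit_def using perm_group_comp[OF K that k(1)] by blast
  qed
  moreover have "k' x \<in> orbit K y" if "k' \<in> K" for k'
  proof -
    have "k' x = (k' \<circ> inv k) y" using k perm_group_bij[OF K k(1)] by (simp add: bij_inv_cancel)
    then show ?thesis unfolding orbit_def using perm_group_comp[OF K that perm_group_inv[OF K k(1)]]
      by blast
  qed
  ultimately show ?thesis unfolding orbit_def by blast
qed

lemma image_orbit_normal:
  assumes H: "perm_group V H" and K: "normal_sub V K H" and h: "h \<in> H"
  shows "h ` orbit K x = orbit K (h x)"
proof -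
  have "h (k x) \<in> orbit K (h x)" if "k \<in> K" for k
  proof -
    have "h (k x) = (h \<circ> k \<circ> inv h) (h x)" using perm_group_bij[OF H h]
      by (simp add: bij_inv_cancel)
    then show ?thesis unfolding orbit_def using normal_sub_conj[OF K h that] by blast
  qed
  moreover have "k (h x) \<in> h ` orbit K x" if "k \<in> K" for k
  proof -
    have "k (h x) = h ((inv h \<circ> k \<circ> h) x)" using perm_group_bij[OF H h]
      by (simp add: bij_inv_cancel)
    then show ?thesis unfolding orbit_def using normal_sub_conj_inv[OF H K h that] by blast
  qed
  ultimately show ?thesis unfolding orbit_def by blast
qed

lemma transitive_on_orbit:
  assumes K: "perm_group V K"
  shows "transitive_on K (orbit K x)"
  unfolding transitive_on_def
proof (intro ballI)
  fix y z assume "y \<in> orbit K x" "z \<in> orbit K x"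
  then obtain k1 k2 where k: "k1 \<in> K" "k2 \<in> K" "y = k1 x" "z = k2 x" unfolding orbit_def by blast
  then have "(k2 \<circ> inv k1) y = z" using perm_group_bij[OF K k(1)] by (simp add: bij_inv_cancel)
  then show "\<exists>k\<in>K. k y = z" using k perm_group_comp[OF K] perm_group_inv[OF K] by blast
qed

lemma normal_sub_primitive_trivial_or_transitive:
  assumes prim: "primitive_on H \<Omega>" and fin: "finite \<Omega>" and H: "perm_group V H"
    and K: "normal_sub V K H" and stable: "\<And>k x. k \<in> K \<Longrightarrow> x \<in> \<Omega> \<Longrightarrow> k x \<in> \<Omega>"
  shows "(\<forall>k\<in>K. \<forall>x\<in>\<Omega>. k x = x) \<or> transitive_on K \<Omega>"
proof (cases "\<forall>k\<in>K. \<forall>x\<in>\<Omega>. k x = x")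
  case False
  then obtain k x where k: "k \<in> K" and x: "x \<in> \<Omega>" and moved: "k x \<noteq> x" by blast
  have Kpg: "perm_group V K" by (rule normal_sub_perm_group[OF K])
  have sub: "orbit K x \<subseteq> \<Omega>" using stable x unfolding orbit_def by blast
  have block: "h ` orbit K x = orbit K x \<or> h ` orbit K x \<inter> orbit K x = {}" if h: "h \<in> H" for h
  proof (rule disjCI)
    assume "h ` orbit K x \<inter> orbit K x \<noteq> {}"
    then obtain y where "y \<in> orbit K (h x)" "y \<in> orbit K x"
      unfolding image_orbit_normal[OF H K h] by blast
    then have "orbit K (h x) = orbit K x" using orbit_eq[OF Kpg] by metis
    then show "h ` orbit K x = orbit K x" unfolding image_orbit_normal[OF H K h] .
  qed
  have "x \<in> orbit K x" "k x \<in> orbit K x" using orbit_self[OF Kpg] k unfolding orbit_def by auto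
  then have "\<not> card (orbit K x) \<le> 1"
    using card_le_Suc0_iff_eq[OF finite_subset[OF sub fin]] moved by (metis One_nat_def)
  moreover have "card (orbit K x) \<le> 1 \<or> orbit K x = \<Omega>"
    using prim sub block unfolding primitive_on_def by (simp add: Ball_def)
  ultimately have "orbit K x = \<Omega>" by blast
  then show ?thesis using transitive_on_orbit[OF Kpg, of x] by simp
qed simp

section \<open>Local action of vertex stabilisers\<close>

lemma simple_graph_sym: "simple_graph V E \<Longrightarrow> E x y \<Longrightarrow> E y x"
  and simple_graph_vertices: "simple_graph V E \<Longrightarrow> E x y \<Longrightarrow> x \<in> V \<and> y \<in> V"
  unfolding simple_graph_def by blast+

lemma is_aut_edge_iff: "is_aut V E g \<Longrightarrow> E (g x) (g y) \<longleftrightarrow> E x y"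
  unfolding is_aut_def by blast

lemma stab_trivial_if_fixes_nbhds:
  assumes G: "simple_graph V E" and conn: "connected_graph V E"
    and K: "perm_group V K" and a: "a \<in> V"
    and fixes_nbhd: "\<And>d. d \<in> V \<Longrightarrow> \<forall>k\<in>stab K d. \<forall>x\<in>nbhd E d. k x = x"
  shows "stab K a = {id}"
proof -
  have "k = id" if k: "k \<in> stab K a" for k
  proof -
    have fixes_reachable: "c \<in> V \<and> k c = c" if "E\<^sup>*\<^sup>* a c" for c
      using that
    proof (induction rule: rtranclp_induct)
      case base
      then show ?case using a k by (simp add: stab_def)
    next
      case (step c z)
      then have "c \<in> V" "k \<in> stab K c" using k by (simp_all add: stab_def)
      then show ?case
        using fixes_nbhd step(2) simple_graph_vertices[OF G step(2)] by (auto simp: nbhd_def)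
    qed
    have "k x = x" for x
    proof (cases "x \<in> V")
      case True
      then show ?thesis using fixes_reachable conn a unfolding connected_graph_def by blast
    next
      case False
      then show ?thesis using perm_group_fixes_outside[OF K] k by (simp add: stab_def)
    qed
    then show "k = id" by (simp add: fun_eq_iff)
  qed
  then show ?thesis using perm_group_id[OF K] by (auto simp: stab_def)
qed

lemma transitive_on_stab_conj:
  assumes M: "perm_group V M" and X: "normal_sub V X M" and m: "m \<in> M" "is_aut V E m"
    and trans: "transitive_on (stab X d) (nbhd E d)"
  shows "transitive_on (stab X (m d)) (nbhd E (m d))"
  unfolding transitive_on_def
proof (intro ballI)
  fix u v assume "u \<in> nbhd E (m d)" "v \<in> nbhd E (m d)"
  then have "inv m u \<in> nbhd E d" "inv m v \<in> nbhd E d"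
    using is_aut_edge_iff[OF m(2)] bij_inv_cancel(2)[OF perm_group_bij[OF M m(1)]]
    unfolding nbhd_def by (metis mem_Collect_eq)+
  then obtain k where k: "k \<in> X" "k d = d" "k (inv m u) = inv m v"
    using trans unfolding transitive_on_def stab_def by blast
  then have "(m \<circ> k \<circ> inv m) u = v" "(m \<circ> k \<circ> inv m) (m d) = m d"
    using perm_group_bij[OF M m(1)] by (simp_all add: bij_inv_cancel)
  moreover have "m \<circ> k \<circ> inv m \<in> X" by (rule normal_sub_conj[OF X m(1) k(1)])
  ultimately show "\<exists>k\<in>stab X (m d). k u = v" unfolding stab_def by blast
qed

lemma nbhd_of_orbit_subset_orbit:
  assumes M: "perm_group V M" and aut: "\<forall>m\<in>M. is_aut V E m"
    and trans: "transitive_on (stab M b) (nbhd E b)" and bd: "E b d"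
    and u: "u \<in> orbit M b" and uy: "E u y"
  shows "y \<in> orbit M d"
proof -
  obtain m where m: "m \<in> M" "u = m b" using u unfolding orbit_def by blast
  have "E b (inv m y)"
    using uy m is_aut_edge_iff[OF aut[rule_format, OF m(1)], of b "inv m y"] perm_group_bij[OF M m(1)]
    by (simp add: bij_inv_cancel)
  then obtain h where h: "h \<in> M" "h b = b" "h d = inv m y"
    using trans bd unfolding transitive_on_def stab_def nbhd_def by blast
  then have "y = (m \<circ> h) d" using perm_group_bij[OF M m(1)] by (simp add: bij_inv_cancel)
  then show ?thesis unfolding orbit_def using perm_group_comp[OF M m(1) h(1)] by blast
qed

lemma finite_nbhd: "simple_graph V E \<Longrightarrow> finite (nbhd E d)"
  unfolding simple_graph_def nbhd_def
  by (metis (no_types, lifting) finite_subset mem_Collect_eq subsetI)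

lemma locally_primitive_stab_normal_trivial_or_transitive:
  assumes G: "simple_graph V E" and M: "perm_group V M" and aut: "\<forall>m\<in>M. is_aut V E m"
    and X: "normal_sub V X M" and lp: "locally_primitive V E M" and d: "d \<in> V"
  shows "(\<forall>k\<in>stab X d. \<forall>x\<in>nbhd E d. k x = x) \<or> transitive_on (stab X d) (nbhd E d)"
proof (rule normal_sub_primitive_trivial_or_transitive)
  show "primitive_on (stab M d) (nbhd E d)" using lp d unfolding locally_primitive_def by blast
  show "finite (nbhd E d)" by (rule finite_nbhd[OF G])
  show "perm_group V (stab M d)" by (rule perm_group_stab[OF M])
  show "normal_sub V (stab X d) (stab M d)" by (rule normal_sub_stab[OF M X])
  fix k x assume "k \<in> stab X d" "x \<in> nbhd E d"
  moreover from this have "is_aut V E k" using aut normal_sub_subset[OF X] by (auto simp: stab_def)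
  ultimately show "k x \<in> nbhd E d"
    using is_aut_edge_iff[of V E k d x] by (simp add: stab_def nbhd_def)
qed

section \<open>Walks of even length\<close>

definition even_walk :: "('a \<Rightarrow> 'a \<Rightarrow> bool) \<Rightarrow> 'a \<Rightarrow> 'a \<Rightarrow> bool" where
  "even_walk E v w \<longleftrightarrow> (\<exists>k. (E ^^ (2 * k)) v w)"

lemma relpowp_sym:
  assumes sym: "\<And>x y. E x y \<Longrightarrow> E y x" and "(E ^^ k) x y"
  shows "(E ^^ k) y x"
  using assms(2)
proof (induction k arbitrary: y)
  case (Suc k)
  then obtain z where z: "(E ^^ k) x z" "E z y" by (auto elim: relpowp_Suc_E)
  show ?case by (rule relpowp_Suc_I2[OF sym[OF z(2)] Suc.IH[OF z(1)]])
qed simp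

lemma relpowp_aut:
  assumes g: "is_aut V E g" and "(E ^^ k) x y"
  shows "(E ^^ k) (g x) (g y)"
  using assms(2)
proof (induction k arbitrary: y)
  case (Suc k)
  then obtain z where z: "(E ^^ k) x z" "E z y" by (auto elim: relpowp_Suc_E)
  show ?case by (rule relpowp_Suc_I[OF Suc.IH[OF z(1)] is_aut_edge_iff[OF g, THEN iffD2, OF z(2)]])
qed simp

lemma even_walk_refl: "even_walk E v v"
  unfolding even_walk_def by (rule exI[of _ 0]) simp

lemma even_walk_trans:
  assumes "even_walk E u v" "even_walk E v w"
  shows "even_walk E u w"
proof -
  obtain k1 k2 where "(E ^^ (2 * k1)) u v" "(E ^^ (2 * k2)) v w" using assms unfolding even_walk_def
    by blast
  then have "(E ^^ (2 * (k1 + k2))) u w" unfolding distrib_left by (rule relpowp_trans)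
  then show ?thesis unfolding even_walk_def by blast
qed

lemma even_walk_sym:
  assumes G: "simple_graph V E" and "even_walk E v w"
  shows "even_walk E w v"
  using assms(2) relpowp_sym[of E, OF simple_graph_sym[OF G]] unfolding even_walk_def by blast

lemma even_walk_aut:
  assumes g: "is_aut V E g" and "even_walk E v w"
  shows "even_walk E (g v) (g w)"
  using assms(2) relpowp_aut[OF g] unfolding even_walk_def by blast

lemma even_walk_if_equidistant:
  assumes G: "simple_graph V E" and "(E ^^ j) v a" "(E ^^ j) w a"
  shows "even_walk E v w"
proof -
  have "(E ^^ (j + j)) v w"
    using relpowp_trans[OF assms(2) relpowp_sym[OF simple_graph_sym[OF G] assms(3)]] .
  then show ?thesis unfolding even_walk_def mult_2[symmetric] by blast
qed

definition even_displacement ::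
    "'a set \<Rightarrow> ('a \<Rightarrow> 'a \<Rightarrow> bool) \<Rightarrow> ('a \<Rightarrow> 'a) set \<Rightarrow> ('a \<Rightarrow> 'a) set" where
  "even_displacement V E M = {m \<in> M. \<forall>v\<in>V. even_walk E v (m v)}"

lemma perm_group_even_displacement:
  assumes G: "simple_graph V E" and M: "perm_group V M"
  shows "perm_group V (even_displacement V E M)"
proof (rule perm_group_subset[OF M])
  show "id \<in> even_displacement V E M"
    using perm_group_id[OF M] by (simp add: even_displacement_def even_walk_refl)
next
  fix f g assume f: "f \<in> even_displacement V E M" and g: "g \<in> even_displacement V E M"
  have "even_walk E v (f (g v))" if v: "v \<in> V" for v
  proof (rule even_walk_trans)
    show "even_walk E v (g v)" using g v by (simp add: even_displacement_def)
    have "g v \<in> V" using g v perm_group_apply[OF M] by (simp add: even_displacement_def)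
    then show "even_walk E (g v) (f (g v))" using f by (simp add: even_displacement_def)
  qed
  then show "f \<circ> g \<in> even_displacement V E M"
    using f g perm_group_comp[OF M] by (simp add: even_displacement_def)
next
  fix f assume f: "f \<in> even_displacement V E M"
  then have fM: "f \<in> M" by (simp add: even_displacement_def)
  have "even_walk E v (inv f v)" if v: "v \<in> V" for v
  proof -
    have "inv f v \<in> V" using perm_group_apply[OF M perm_group_inv[OF M fM] v] .
    then have "even_walk E (inv f v) (f (inv f v))" using f by (simp add: even_displacement_def)
    then show ?thesis
      using even_walk_sym[OF G] bij_inv_cancel(2)[OF perm_group_bij[OF M fM]] by metis
  qed
  then show "inv f \<in> even_displacement V E M"
    using perm_group_inv[OF M fM] by (simp add: even_displacement_def)
qed (simp add: even_displacement_def)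

lemma even_displacement_normal:
  assumes G: "simple_graph V E" and H: "perm_group V H" and aut: "\<forall>h\<in>H. is_aut V E h"
    and M: "normal_sub V M H"
  shows "normal_sub V (even_displacement V E M) H"
  unfolding normal_sub_def subgrp_def
proof (intro conjI ballI)
  show "perm_group V (even_displacement V E M)"
    by (rule perm_group_even_displacement[OF G normal_sub_perm_group[OF M]])
  show "even_displacement V E M \<subseteq> H"
    using normal_sub_subset[OF M] by (auto simp: even_displacement_def)
  fix h m assume h: "h \<in> H" and m: "m \<in> even_displacement V E M"
  have "even_walk E v ((h \<circ> m \<circ> inv h) v)" if v: "v \<in> V" for v
  proof -
    have "inv h v \<in> V" using perm_group_apply[OF H perm_group_inv[OF H h] v] .
    then have "even_walk E (inv h v) (m (inv h v))" using m by (simp add: even_displacement_def)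
    then have "even_walk E (h (inv h v)) (h (m (inv h v)))"
      by (rule even_walk_aut[OF aut[rule_format, OF h]])
    then show ?thesis using bij_inv_cancel(2)[OF perm_group_bij[OF H h]] by simp
  qed
  then show "h \<circ> m \<circ> inv h \<in> even_displacement V E M"
    using normal_sub_conj[OF M h] m by (simp add: even_displacement_def)
qed

lemma stab_subset_even_displacement:
  assumes G: "simple_graph V E" and conn: "connected_graph V E"
    and aut: "\<forall>m\<in>M. is_aut V E m" and a: "a \<in> V"
  shows "stab M a \<subseteq> even_displacement V E M"
proof
  fix m assume m: "m \<in> stab M a"
  then have mM: "m \<in> M" and ma: "m a = a" by (simp_all add: stab_def)
  have "even_walk E v (m v)" if v: "v \<in> V" for v
  proof -
    obtain j where j: "(E ^^ j) v a"
      using conn v a unfolding connected_graph_def rtranclp_power by blast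
    have "(E ^^ j) (m v) a" using relpowp_aut[OF aut[rule_format, OF mM] j] ma by simp
    then show ?thesis using even_walk_if_equidistant[OF G j] by blast
  qed
  then show "m \<in> even_displacement V E M" using m by (simp add: stab_def even_displacement_def)
qed

lemma even_walk_in_orbit:
  assumes G: "simple_graph V E" and X: "perm_group V X"
    and trans: "\<And>u y. u \<in> orbit X b \<Longrightarrow> E u y \<Longrightarrow> transitive_on (stab X y) (nbhd E y)"
    and w: "even_walk E b w"
  shows "w \<in> orbit X b"
proof -
  have "w \<in> orbit X b" if "(E ^^ (2 * k)) b w" for k w
    using that
  proof (induction k arbitrary: w)
    case 0
    then show ?case using orbit_self[OF X] by simp
  next
    case (Suc k)
    then have "(E ^^ Suc (Suc (2 * k))) b w" by simp
    then obtain u y where uy: "(E ^^ (2 * k)) b u" "E u y" "E y w" by (auto elim!: relpowp_Suc_E)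
    obtain x where x: "x \<in> X" "u = x b" using Suc.IH[OF uy(1)] unfolding orbit_def by blast
    have "u \<in> nbhd E y" "w \<in> nbhd E y" using uy simple_graph_sym[OF G] by (auto simp: nbhd_def)
    then obtain k' where k': "k' \<in> X" "k' u = w"
      using trans[OF Suc.IH[OF uy(1)] uy(2)] unfolding transitive_on_def stab_def by blast
    have "w = (k' \<circ> x) b" using x k' by simp
    then show ?case unfolding orbit_def using perm_group_comp[OF X k'(1) x(1)] by blast
  qed
  then show ?thesis using w unfolding even_walk_def by blast
qed

lemma even_walk_in_normal_sub_orbit:
  assumes G: "simple_graph V E" and M: "perm_group V M" and aut: "\<forall>m\<in>M. is_aut V E m"
    and X: "normal_sub V X M" and lp: "locally_primitive V E M"
    and d: "transitive_on (stab X d) (nbhd E d)" and db: "E d b" and w: "even_walk E b w"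
  shows "w \<in> orbit X b"
proof (rule even_walk_in_orbit[OF G normal_sub_perm_group[OF X] _ w])
  fix u y assume u: "u \<in> orbit X b" and uy: "E u y"
  have "b \<in> V" using simple_graph_vertices[OF G db] by blast
  then have "transitive_on (stab M b) (nbhd E b)"
    using lp unfolding locally_primitive_def primitive_on_def by blast
  moreover have "u \<in> orbit M b" using u normal_sub_subset[OF X] unfolding orbit_def by blast
  ultimately have "y \<in> orbit M d"
    using nbhd_of_orbit_subset_orbit[OF M aut] simple_graph_sym[OF G db] uy by blast
  then obtain m where "m \<in> M" "y = m d" unfolding orbit_def by blast
  then show "transitive_on (stab X y) (nbhd E y)"
    using transitive_on_stab_conj[OF M X] aut d by blast
qed

lemma even_displacement_proper:
  assumes G: "simple_graph V E" and M: "perm_group V M" and M_aut: "\<forall>m\<in>M. is_aut V E m"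
    and dp: "internal_direct_product V M T n" and i: "i < n" and lp: "locally_primitive V E M"
    and proper: "\<forall>b\<in>V. proj V T n i ` stab M b \<subset> T i"
    and d: "d \<in> V" "transitive_on (stab (compl_factors V T n i) d) (nbhd E d)"
  shows "even_displacement V E M \<noteq> M"
proof
  assume all_even: "even_displacement V E M = M"
  have "nbhd E d \<noteq> {}" using lp d(1) unfolding locally_primitive_def primitive_on_def by blast
  then obtain b where db: "E d b" unfolding nbhd_def by blast
  have b: "b \<in> V" using simple_graph_vertices[OF G db] by blast
  have "t b \<in> orbit (compl_factors V T n i) b" if "t \<in> T i" for t
  proof (rule even_walk_in_normal_sub_orbit[OF G M M_aut compl_factors_normal[OF dp] lp d(2) db])
    have "t \<in> M" using that normal_sub_subset[OF internal_direct_product_factor[OF dp i]] by blast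
    then show "even_walk E b (t b)" using all_even b unfolding even_displacement_def by blast
  qed
  then have "T i \<subseteq> proj V T n i ` stab M b" by (rule factor_subset_proj_stab[OF dp i])
  then show False using proper b by blast
qed

lemma compl_factors_stab_trivial:
  assumes G: "simple_graph V E" and conn: "connected_graph V E"
    and H: "perm_group V H" and H_aut: "\<forall>h\<in>H. is_aut V E h"
    and M: "normal_sub V M H" and M_min: "\<And>K. normal_sub V K H \<Longrightarrow> K \<subseteq> M \<Longrightarrow> K = {id} \<or> K = M"
    and dp: "internal_direct_product V M T n" and i: "i < n" and lp: "locally_primitive V E M"
    and proper: "\<forall>b\<in>V. proj V T n i ` stab M b \<subset> T i" and a: "a \<in> V"
  shows "stab (compl_factors V T n i) a = {id}"
proof -
  let ?X = "compl_factors V T n i"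
  have M_pg: "perm_group V M" by (rule normal_sub_perm_group[OF M])
  have M_aut: "\<forall>m\<in>M. is_aut V E m" using normal_sub_subset[OF M] H_aut by blast
  have X: "normal_sub V ?X M" by (rule compl_factors_normal[OF dp])
  show ?thesis
  proof (cases "\<exists>d\<in>V. transitive_on (stab ?X d) (nbhd E d)")
    case False
    have "\<forall>k\<in>stab ?X d. \<forall>x\<in>nbhd E d. k x = x" if "d \<in> V" for d
      using locally_primitive_stab_normal_trivial_or_transitive[OF G M_pg M_aut X lp that] False that
      by blast
    then show ?thesis by (rule stab_trivial_if_fixes_nbhds[OF G conn normal_sub_perm_group[OF X] a])
  next
    case True
    then have "even_displacement V E M \<noteq> M"
      using even_displacement_proper[OF G M_pg M_aut dp i lp proper] by blast
    moreover have "even_displacement V E M = {id} \<or> even_displacement V E M = M"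
      by (rule M_min[OF even_displacement_normal[OF G H H_aut M]]) (auto simp: even_displacement_def)
    ultimately have "stab M a \<subseteq> {id}" using stab_subset_even_displacement[OF G conn M_aut a] by simp
    moreover have "stab ?X a \<subseteq> stab M a" using normal_sub_subset[OF X] by (auto simp: stab_def)
    moreover have "id \<in> stab ?X a"
      using perm_group_id[OF normal_sub_perm_group[OF X]] by (simp add: stab_def)
    ultimately show ?thesis by blast
  qed
qed

theorem lemma4p2:
  fixes V :: "'a set" and E :: "'a \<Rightarrow> 'a \<Rightarrow> bool"
    and G Gstar M :: "('a \<Rightarrow> 'a) set"
    and T :: "nat \<Rightarrow> ('a \<Rightarrow> 'a) set" and n :: nat
    and a1 a2 :: 'a
  assumes graph: "simple_graph V E"
    and conn: "connected_graph V E"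
    and val: "\<forall>a\<in>V. card (nbhd E a) \<ge> 3"
    and aut: "aut_subgroup V E G"
    and arc2: "two_arc_transitive E G"
    and edge: "E a1 a2"
    and Gstar_def: "Gstar = gen V (stab G a1 \<union> stab G a2)"
    and M_def: "M = soc V Gstar"
    and qp: "\<forall>x\<in>V. quasiprimitive_on V Gstar (orbit Gstar x)"
    and M_unique: "minimal_normal V M Gstar \<and> (\<forall>N. minimal_normal V N Gstar \<longrightarrow> N = M)"
    and n_ge: "n \<ge> 2"
    and dprod: "internal_direct_product V M T n"
    and simple: "\<forall>i<n. nonabelian_simple V (T i)"
    and isom: "\<forall>i<n. \<forall>j<n. grp_iso (T i) (T j)"
    and PA: "\<forall>a\<in>V. \<exists>R :: nat \<Rightarrow> ('a \<Rightarrow> 'a) set.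
               (\<forall>i<n. subgrp V (R i) (T i) \<and> R i \<noteq> T i)
             \<and> stab M a \<subseteq> {m \<in> M. \<forall>i<n. proj V T n i m \<in> R i}
             \<and> (\<forall>i<n. proj V T n i ` stab M a = R i)"
    and lp: "locally_primitive V E M"
  shows "\<forall>a\<in>V. \<forall>i<n. inj_on (proj V T n i) (stab M a)"
proof (intro ballI allI impI)
  fix a i assume a: "a \<in> V" and i: "i < n"
  have G: "perm_group V G" and G_aut: "\<forall>g\<in>G. is_aut V E g" using aut unfolding aut_subgroup_def
    by auto
  have gens: "stab G a1 \<union> stab G a2 \<subseteq> G" by (auto simp: stab_def)
  have Gstar: "perm_group V Gstar" unfolding Gstar_def by (rule perm_group_gen[OF G gens])
  have Gstar_aut: "\<forall>g\<in>Gstar. is_aut V E g" using gen_least[OF G gens] G_aut unfolding Gstar_def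
    by blast
  have M: "normal_sub V M Gstar"
    and M_min: "\<And>K. normal_sub V K Gstar \<Longrightarrow> K \<subseteq> M \<Longrightarrow> K = {id} \<or> K = M"
    using M_unique unfolding minimal_normal_def by auto
  have proper: "\<forall>b\<in>V. proj V T n i ` stab M b \<subset> T i"
  proof
    fix b assume "b \<in> V"
    from bspec[OF PA this] obtain R where
      "\<forall>i<n. subgrp V (R i) (T i) \<and> R i \<noteq> T i" "\<forall>i<n. proj V T n i ` stab M b = R i"
      by (elim exE conjE)
    then show "proj V T n i ` stab M b \<subset> T i" using i unfolding subgrp_def by auto
  qed
  have "stab (compl_factors V T n i) a = {id}"
    by (rule compl_factors_stab_trivial[OF graph conn Gstar Gstar_aut M M_min dprod i lp proper a])
  moreover have "stab M a \<inter> compl_factors V T n i \<subseteq> stab (compl_factors V T n i) a"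
    by (auto simp: stab_def)
  ultimately show "inj_on (proj V T n i) (stab M a)"
    using inj_on_proj[OF dprod i perm_group_stab[OF normal_sub_perm_group[OF M]]]
    by (auto simp: stab_def)
qed

end
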